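(* In the stalactic monoid ${\mathsf{stal}}$, the relation $\sim_o$ coincides with $\equiv_{\mathrm{ev}}$: for $s,t\in{\mathsf{stal}}$, there exist $g,h\in{\mathsf{stal}}$ with $sg=gt$ and $hs=th$ if and only if $s$ and $t$ have the same evaluation.
   Context: Let $\mathcal{A}=\{1<2<3<\cdots\}$ be the ordered alphabet of positive integers. For a monoid $M$ and $x,y\in M$, write $x\sim_o y$ iff there exist $g,h\in M$ with $xg=gy$ and $hx=yh$. The evaluation of a word $w$ is the tuple $(|w|_a)_{a}$ giving the number of occurrences of each letter $a$; the monoid below is defined by evaluation-preserving relations, so the evaluation of an element is well defined, and $s\equiv_{\mathrm{ev}} t$ means $s$ and $t$ have the same evaluation. The stalactic monoid ${\mathsf{stal}}$ is $\mathcal{A}^*$ modulo the congruence generated by the relations $bavb=abvb$ for all letters $a,b$ and words $v\in\mathcal{A}^*$. Equivalently, two words are equal in ${\mathsf{stal}}$ iff they have the same evaluation and the same order of rightmost occurrences of their letters. *)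

theory Defs
  imports Main "HOL-Library.Multiset"
begin

definition is_word :: "nat list \<Rightarrow> bool" where
  "is_word w \<longleftrightarrow> (\<forall>a \<in> set w. 0 < a)"

inductive stal_cong :: "nat list \<Rightarrow> nat list \<Rightarrow> bool" where
  stal_rel: "stal_cong ([b, a] @ v @ [b]) ([a, b] @ v @ [b])"
| stal_refl: "stal_cong u u"
| stal_sym: "stal_cong u w \<Longrightarrow> stal_cong w u"
| stal_trans: "stal_cong u w \<Longrightarrow> stal_cong w z \<Longrightarrow> stal_cong u z"
| stal_ctx: "stal_cong u w \<Longrightarrow> stal_cong (x @ u @ y) (x @ w @ y)"

text \<open>Evaluation of a word: the multiset of its letters (equivalently the tuple of
  letter counts).\<close>

definition ev :: "nat list \<Rightarrow> nat multiset" where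
  "ev w = mset w"

end

theory Submission
  imports Defs
begin

text \<open>The defining relations preserve evaluation, which gives one direction. Conversely, a
  letter b that occurs again further to the right commutes with its right neighbour, so
  a prefix whose letters all reappear in the suffix may be permuted freely. If s and
  t have the same evaluation they have the same letters, hence s t = t t and
  s s = t s in the stalactic monoid: take g = t and h = s.\<close>

lemma stal_cong_mset_eq: "stal_cong u w \<Longrightarrow> mset u = mset w"
  by (induction rule: stal_cong.induct) auto

lemma stal_cong_append_left: "stal_cong u w \<Longrightarrow> stal_cong (x @ u) (x @ w)"
  using stal_ctx[of u w x "[]"] by simp

lemma stal_cong_swap_if_reoccurs:
  assumes "b \<in> set w"
  shows "stal_cong (b # a # u @ w) (a # b # u @ w)"
proof -
  from assms obtain w1 w2 where w: "w = w1 @ b # w2"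
    by (meson split_list)
  have "stal_cong ([] @ ([b, a] @ (u @ w1) @ [b]) @ w2) ([] @ ([a, b] @ (u @ w1) @ [b]) @ w2)"
    by (rule stal_ctx[OF stal_rel])
  then show ?thesis
    using w by simp
qed

lemma stal_cong_move_to_front:
  "set x \<subseteq> set w \<Longrightarrow> stal_cong (x @ a # u @ w) (a # x @ u @ w)"
proof (induction x)
  case Nil
  then show ?case by (simp add: stal_refl)
next
  case (Cons b x)
  have "stal_cong (b # x @ a # u @ w) (b # a # x @ u @ w)"
    using stal_cong_append_left[OF Cons.IH, of "[b]"] Cons.prems by simp
  moreover have "stal_cong (b # a # x @ u @ w) (a # b # x @ u @ w)"
    using stal_cong_swap_if_reoccurs[of b w a "x @ u"] Cons.prems by simp
  ultimately show ?case
    by (auto intro: stal_trans)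
qed

lemma stal_cong_permute_prefix:
  "mset u = mset u' \<Longrightarrow> set u \<subseteq> set w \<Longrightarrow> stal_cong (u @ w) (u' @ w)"
proof (induction u' arbitrary: u)
  case Nil
  then show ?case by (simp add: stal_refl)
next
  case (Cons a u')
  have "a \<in> set u"
    using Cons.prems(1) by (metis list.set_intros(1) set_mset_mset)
  then obtain x r where u: "u = x @ a # r"
    by (meson split_list)
  have "mset (x @ r) = mset u'" and "set (x @ r) \<subseteq> set w"
    using Cons.prems u by auto
  then have "stal_cong (a # (x @ r) @ w) (a # u' @ w)"
    using stal_cong_append_left[OF Cons.IH, of "x @ r" "[a]"] by simp
  moreover have "stal_cong (u @ w) (a # x @ r @ w)"
    using stal_cong_move_to_front[of x w a r] \<open>set (x @ r) \<subseteq> set w\<close> u by simp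
  ultimately show ?case
    by (auto intro: stal_trans)
qed

theorem mainTheorem9:
  assumes "is_word s" and "is_word t"
  shows "(\<exists>g h. is_word g \<and> is_word h \<and>
            stal_cong (s @ g) (g @ t) \<and> stal_cong (h @ s) (t @ h))
         \<longleftrightarrow> ev s = ev t"
proof
  assume "\<exists>g h. is_word g \<and> is_word h \<and>
            stal_cong (s @ g) (g @ t) \<and> stal_cong (h @ s) (t @ h)"
  then obtain g where "stal_cong (s @ g) (g @ t)"
    by blast
  then show "ev s = ev t"
    by (auto dest: stal_cong_mset_eq simp: ev_def add.commute)
next
  assume "ev s = ev t"
  then have mset_eq: "mset s = mset t"
    by (simp add: ev_def)
  then have "set s = set t"
    by (metis set_mset_mset)
  then have "stal_cong (s @ t) (t @ t)" and "stal_cong (s @ s) (t @ s)"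
    using stal_cong_permute_prefix[OF mset_eq] by auto
  then show "\<exists>g h. is_word g \<and> is_word h \<and>
            stal_cong (s @ g) (g @ t) \<and> stal_cong (h @ s) (t @ h)"
    using assms by (intro exI[of _ t] exI[of _ s]) (auto intro: stal_sym)
qed

end
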